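(* Let $n,k,r$ be integers with $k,r\geq 2$ and $n\geq k+r$, and let $H$ be a vertex-$k$-maximal $r$-uniform hypergraph on $n$ vertices with a separation triple $(S,H_1,H_2)$, and let $n_i=|V(H_i)|$ for $i=1,2$. Then (i) every $r$-subset $e$ of $V(H)$ with $e\cap (V(H_1)\setminus S)\neq\emptyset$, $e\cap S\neq\emptyset$ and $e\cap (V(H_2)\setminus S)\neq\emptyset$ is an edge of $H$; and (ii) the number of edges of $H$ meeting each of $V(H_1)\setminus S$, $S$ and $V(H_2)\setminus S$ equals $$\binom{n}{r}-\binom{n_1}{r}-\binom{n_2}{r}+\binom{k}{r}-\binom{n-k}{r}+\binom{n_1-k}{r}+\binom{n_2-k}{r}.$$
   Context: Binomial coefficients satisfy $\binom{a}{b}=0$ when $b>a$. A hypergraph $H=(V,E)$ consists of a finite vertex set $V$ and a set $E$ of non-empty subsets of $V$ (edges). $H$ is $r$-uniform if every edge has exactly $r$ elements. The complement $H^c$ of an $r$-uniform hypergraph is the $r$-uniform hypergraph on the same vertex set whose edges are the $r$-subsets not in $E$. A subhypergraph of $H$ is $H'=(V',E')$ with $V'\subseteq V$, $E'\subseteq E$. For $e\in E(H^c)$, $H+e=(V,E\cup\{e\})$. For $Y\subseteq V$, $H[Y]$ is the induced hypergraph with vertex set $Y$ and edges $\{e\in E: e\subseteq Y\}$, and $H-Y=H[V\setminus Y]$. Connectedness and components are defined via paths (alternating sequences of distinct vertices and distinct edges, consecutive vertices lying in the intermediate edge). A vertex-cut is a set $X$ with $H-X$ disconnected. $\kappa(H)$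 is the minimum size of a vertex-cut if one exists, and $|V(H)|-1$ otherwise. $\overline{\kappa}(H)=\max\{\kappa(H'): H'\subseteq H\}$. $H$ is vertex-$k$-maximal if $\overline{\kappa}(H)\leq k$ but $\overline{\kappa}(H+e)\geq k+1$ for every $e\in E(H^c)$. For such $H$ with $|V(H)|\geq k+r$, a separation triple $(S,H_1,H_2)$ is obtained by taking a minimum vertex-cut $S$ (of size $k$), a component $C_1$ of $H-S$, letting $C_2=H-(S\cup V(C_1))$, $H_1=H[S\cup V(C_1)]$ and $H_2=H[S\cup V(C_2)]$. *)

theory Defs
  imports Main
begin

type_synonym 'a hg = "'a set \<times> 'a set set"

definition verts :: "'a hg \<Rightarrow> 'a set" where "verts H = fst H"
definition edges :: "'a hg \<Rightarrow> 'a set set" where "edges H = snd H"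

definition hypergraph :: "'a hg \<Rightarrow> bool" where
  "hypergraph H \<longleftrightarrow> finite (verts H) \<and> (\<forall>e\<in>edges H. e \<noteq> {} \<and> e \<subseteq> verts H)"

definition uniform :: "nat \<Rightarrow> 'a hg \<Rightarrow> bool" where
  "uniform r H \<longleftrightarrow> (\<forall>e\<in>edges H. card e = r)"

definition compl_edges :: "nat \<Rightarrow> 'a hg \<Rightarrow> 'a set set" where
  "compl_edges r H = {e. e \<subseteq> verts H \<and> card e = r \<and> e \<notin> edges H}"

definition add_edge :: "'a hg \<Rightarrow> 'a set \<Rightarrow> 'a hg" where
  "add_edge H e = (verts H, insert e (edges H))"

definition subhypergraph :: "'a hg \<Rightarrow> 'a hg \<Rightarrow> bool" where
  "subhypergraph H' H \<longleftrightarrow> hypergraph H' \<and> verts H' \<subseteq> verts H \<and> edges H' \<subseteq> edges H"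

definition induced :: "'a hg \<Rightarrow> 'a set \<Rightarrow> 'a hg" where
  "induced H Y = (Y, {e\<in>edges H. e \<subseteq> Y})"

definition del_verts :: "'a hg \<Rightarrow> 'a set \<Rightarrow> 'a hg" where
  "del_verts H Y = induced H (verts H - Y)"

definition is_path :: "'a hg \<Rightarrow> 'a list \<Rightarrow> 'a set list \<Rightarrow> bool" where
  "is_path H vs es \<longleftrightarrow> vs \<noteq> [] \<and> length es = length vs - 1 \<and> distinct vs \<and> distinct es \<and>
     set vs \<subseteq> verts H \<and> set es \<subseteq> edges H \<and>
     (\<forall>i < length es. vs ! i \<in> es ! i \<and> vs ! Suc i \<in> es ! i)"

definition joined :: "'a hg \<Rightarrow> 'a \<Rightarrow> 'a \<Rightarrow> bool" where
  "joined H u v \<longleftrightarrow> (\<exists>vs es. is_path H vs es \<and> hd vs = u \<and> last vs = v)"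

definition connected_hg :: "'a hg \<Rightarrow> bool" where
  "connected_hg H \<longleftrightarrow> (\<forall>u\<in>verts H. \<forall>v\<in>verts H. joined H u v)"

definition component_verts :: "'a hg \<Rightarrow> 'a set \<Rightarrow> bool" where
  "component_verts H C \<longleftrightarrow> (\<exists>u\<in>verts H. C = {v\<in>verts H. joined H u v})"

definition vertex_cut :: "'a hg \<Rightarrow> 'a set \<Rightarrow> bool" where
  "vertex_cut H X \<longleftrightarrow> X \<subseteq> verts H \<and> \<not> connected_hg (del_verts H X)"

definition kappa :: "'a hg \<Rightarrow> nat" where
  "kappa H = (if \<exists>X. vertex_cut H X
              then (LEAST m. \<exists>X. vertex_cut H X \<and> card X = m)
              else card (verts H) - 1)"

definition kappa_bar :: "'a hg \<Rightarrow> nat" where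
  "kappa_bar H = Max {kappa H' | H'. subhypergraph H' H}"

definition vertex_k_maximal :: "nat \<Rightarrow> nat \<Rightarrow> 'a hg \<Rightarrow> bool" where
  "vertex_k_maximal k r H \<longleftrightarrow> kappa_bar H \<le> k \<and>
     (\<forall>e\<in>compl_edges r H. kappa_bar (add_edge H e) \<ge> k + 1)"

definition separation_triple :: "'a hg \<Rightarrow> nat \<Rightarrow> 'a set \<Rightarrow> 'a hg \<Rightarrow> 'a hg \<Rightarrow> bool" where
  "separation_triple H k S H1 H2 \<longleftrightarrow>
     vertex_cut H S \<and> card S = kappa H \<and> card S = k \<and>
     (\<exists>C1. component_verts (del_verts H S) C1 \<and>
        H1 = induced H (S \<union> C1) \<and>
        H2 = induced H (S \<union> verts (del_verts H (S \<union> C1))))"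

end

theory Submission
  imports Defs
begin

(*
  (i) Suppose an r-set e meeting C1 = V(H1) - S, S and C2 = V(H2) - S is not an edge. A
  subhypergraph H' of H + e either avoids e, and then lies in H, or contains e; then S \<inter> V(H')
  is a vertex cut of H', since every edge of H' - S misses S, hence differs from e and is an
  edge of H - S, so the ends of e in C1 and C2 stay in different components. Either way
  kappa(H') \<le> k, so kappa_bar(H + e) \<le> k, contradicting maximality.

  (ii) By (i) these edges are exactly the r-subsets of V(H) meeting C1, S and C2. Those meeting
  C1 and S \<union> C2 are counted as binom(|C1 \<union> S \<union> C2|, r) - binom(|C1|, r) - binom(|S \<union> C2|, r);
  subtracting the ones that miss S, or miss C2, counted the same way, gives the formula.
*)

lemma verts_add_edge [simp]: "verts (add_edge H e) = verts H"
  and edges_add_edge [simp]: "edges (add_edge H e) = insert e (edges H)"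
  by (simp_all add: add_edge_def verts_def edges_def)

lemma verts_del_verts [simp]: "verts (del_verts H Y) = verts H - Y"
  and edges_del_verts [simp]: "edges (del_verts H Y) = {e \<in> edges H. e \<subseteq> verts H - Y}"
  by (simp_all add: del_verts_def induced_def verts_def edges_def)

lemma verts_induced [simp]: "verts (induced H Y) = Y"
  by (simp add: induced_def verts_def)

lemma is_path_mono:
  "is_path G vs es \<Longrightarrow> verts G \<subseteq> verts G' \<Longrightarrow> edges G \<subseteq> edges G' \<Longrightarrow> is_path G' vs es"
  by (auto simp: is_path_def)

lemma joined_mono:
  "joined G u v \<Longrightarrow> verts G \<subseteq> verts G' \<Longrightarrow> edges G \<subseteq> edges G' \<Longrightarrow> joined G' u v"
  unfolding joined_def by (blast intro: is_path_mono)

lemma is_path_take: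
  assumes "is_path G vs es" "i < length vs"
  shows "is_path G (take (Suc i) vs) (take i es)"
  using assms unfolding is_path_def by (auto dest: in_set_takeD)

lemma is_path_snoc:
  assumes "is_path G vs es" "f \<in> edges G" "last vs \<in> f" "y \<in> f" "y \<in> verts G"
    and "y \<notin> set vs" "f \<notin> set es"
  shows "is_path G (vs @ [y]) (es @ [f])"
proof -
  have "vs \<noteq> []" "length es = length vs - 1" using assms(1) by (auto simp: is_path_def)
  then have "vs ! i = last vs" if "i < length vs" "\<not> i < length es" for i
    using that by (cases "i = length vs - 1") (auto simp: last_conv_nth)
  with assms show ?thesis
    unfolding is_path_def by (auto simp: nth_append)
qed

lemma joinedI: "is_path G vs es \<Longrightarrow> hd vs = u \<Longrightarrow> last vs = v \<Longrightarrow> joined G u v"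
  unfolding joined_def by blast

lemma joined_step:
  assumes "joined G u x" "f \<in> edges G" "x \<in> f" "y \<in> f" "y \<in> verts G"
  shows "joined G u y"
proof -
  obtain vs es where p: "is_path G vs es" "hd vs = u" "last vs = x"
    using assms(1) by (auto simp: joined_def)
  have ne: "vs \<noteq> []" and len: "length es = length vs - 1"
    using p(1) by (auto simp: is_path_def)
  have hd_take: "hd (take (Suc i) vs @ ws) = u" for i ws
    using ne p(2) by (cases vs) auto
  show ?thesis
  proof (cases "y \<in> set vs")
    case True
    then obtain i where i: "i < length vs" "vs ! i = y" by (auto simp: in_set_conv_nth)
    have "last (take (Suc i) vs) = y" using i by (simp add: take_Suc_conv_app_nth)
    with is_path_take[OF p(1) i(1)] hd_take[of _ "[]"] show ?thesis
      by (auto intro: joinedI)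
  next
    case y_new: False
    show ?thesis
    proof (cases "f \<in> set es")
      case True
      \<comment> \<open>Shortcut: leave the path where it first uses \<open>f\<close> and go straight to \<open>y\<close>.\<close>
      then obtain i where i: "i < length es" "es ! i = f" by (auto simp: in_set_conv_nth)
      have prefix: "is_path G (take (Suc i) vs) (take i es)"
        using is_path_take[OF p(1)] i len by simp
      have last_in: "last (take (Suc i) vs) \<in> f"
        using p(1) i len unfolding is_path_def by (auto simp: take_Suc_conv_app_nth)
      have "f \<in> set (drop i es)"
        unfolding Cons_nth_drop_Suc[OF i(1), symmetric] i(2) by simp
      moreover have "set (take i es) \<inter> set (drop i es) = {}"
        using p(1) by (simp add: is_path_def set_take_disj_set_drop_if_distinct)
      ultimately have f_new: "f \<notin> set (take i es)" by blast
      have y_new': "y \<notin> set (take (Suc i) vs)" using y_new by (auto dest: in_set_takeD)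
      have "is_path G (take (Suc i) vs @ [y]) (take i es @ [f])"
        by (rule is_path_snoc[OF prefix assms(2) last_in assms(4,5) y_new' f_new])
      then show ?thesis using hd_take by (auto intro: joinedI)
    next
      case False
      have "last vs \<in> f" using p(3) assms(3) by simp
      then have "is_path G (vs @ [y]) (es @ [f])"
        by (rule is_path_snoc[OF p(1) assms(2) _ assms(4,5) y_new False])
      then show ?thesis using p(2) ne by (auto intro: joinedI)
    qed
  qed
qed

lemma joined_trans:
  assumes "joined G u x" "joined G x y"
  shows "joined G u y"
proof -
  obtain ws ds where p: "is_path G ws ds" "hd ws = x" "last ws = y"
    using assms(2) by (auto simp: joined_def)
  have ne: "ws \<noteq> []" and len: "length ds = length ws - 1"
    using p(1) by (auto simp: is_path_def)
  have "joined G u (ws ! m)" if "m < length ws" for m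
    using that
  proof (induction m)
    case 0
    then show ?case using assms(1) p(2) ne by (simp add: hd_conv_nth)
  next
    case (Suc m)
    then have "m < length ds" using len by simp
    with p(1) Suc.prems have "ds ! m \<in> edges G" "ws ! m \<in> ds ! m" "ws ! Suc m \<in> ds ! m"
        "ws ! Suc m \<in> verts G"
      unfolding is_path_def by auto
    with Suc show ?case by (meson Suc_lessD joined_step)
  qed
  moreover have "length ws - 1 < length ws" using ne by simp
  ultimately show ?thesis using ne p(3) by (metis last_conv_nth)
qed

lemma kappa_le_card_cut: "vertex_cut G X \<Longrightarrow> kappa G \<le> card X"
  unfolding kappa_def by (auto intro: Least_le)

lemma kappa_le_card_verts:
  assumes "finite (verts G)"
  shows "kappa G \<le> card (verts G)"
proof (cases "\<exists>X. vertex_cut G X")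
  case True
  then obtain X where X: "vertex_cut G X" by blast
  then have "card X \<le> card (verts G)"
    using assms by (auto simp: vertex_cut_def intro: card_mono)
  with kappa_le_card_cut[OF X] show ?thesis by linarith
qed (simp add: kappa_def)

lemma finite_kappa_subhypergraphs:
  assumes "finite (verts G)"
  shows "finite {kappa H' | H'. subhypergraph H' G}"
proof (rule finite_subset)
  show "{kappa H' | H'. subhypergraph H' G} \<subseteq> {..card (verts G)}"
  proof clarify
    fix H' assume H': "subhypergraph H' G"
    then have "finite (verts H')" "verts H' \<subseteq> verts G"
      by (auto simp: subhypergraph_def hypergraph_def)
    then show "kappa H' \<le> card (verts G)"
      using kappa_le_card_verts[of H'] card_mono[OF assms, of "verts H'"] by linarith
  qed
qed simp

lemma kappa_le_kappa_bar:
  "finite (verts G) \<Longrightarrow> subhypergraph H' G \<Longrightarrow> kappa H' \<le> kappa_bar G"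
  unfolding kappa_bar_def by (rule Max_ge) (blast intro: finite_kappa_subhypergraphs)+

lemma kappa_bar_attained:
  assumes "finite (verts G)"
  obtains H' where "subhypergraph H' G" "kappa H' = kappa_bar G"
proof -
  have "subhypergraph ({}, {}) G"
    by (simp add: subhypergraph_def hypergraph_def verts_def edges_def)
  then have "{kappa H' | H'. subhypergraph H' G} \<noteq> {}" by blast
  from Max_in[OF finite_kappa_subhypergraphs[OF assms] this] that show ?thesis
    unfolding kappa_bar_def by auto
qed

lemma kappa_bar_add_edge_le:
  assumes fin: "finite (verts H)" and S: "S \<subseteq> verts H" and eS: "e \<inter> S \<noteq> {}"
    and xy: "x \<in> e - S" "y \<in> e - S" and sep: "\<not> joined (del_verts H S) x y"
  shows "kappa_bar (add_edge H e) \<le> max (kappa_bar H) (card S)"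
proof -
  obtain H' where H': "subhypergraph H' (add_edge H e)" "kappa H' = kappa_bar (add_edge H e)"
    using kappa_bar_attained[of "add_edge H e"] fin by auto
  then have hH': "hypergraph H'" and vH': "verts H' \<subseteq> verts H"
    and eH': "edges H' \<subseteq> insert e (edges H)"
    by (auto simp: subhypergraph_def)
  show ?thesis
  proof (cases "e \<in> edges H'")
    case False
    then have "subhypergraph H' H" using H'(1) eH' by (auto simp: subhypergraph_def)
    then have "kappa H' \<le> kappa_bar H" by (rule kappa_le_kappa_bar[OF fin])
    then show ?thesis using H'(2) by (simp add: le_max_iff_disj)
  next
    case True
    define X where "X = S \<inter> verts H'"
    have eds: "edges (del_verts H' X) \<subseteq> edges (del_verts H S)"
    proof
      fix f assume "f \<in> edges (del_verts H' X)"
      then have f: "f \<in> edges H'" "f \<subseteq> verts H' - X" by auto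
      then have "f \<inter> S = {}" by (auto simp: X_def)
      then have "f \<noteq> e" using eS by blast
      with f eH' vH' \<open>f \<inter> S = {}\<close> show "f \<in> edges (del_verts H S)" by auto
    qed
    have vds: "verts (del_verts H' X) \<subseteq> verts (del_verts H S)"
      using vH' by (auto simp: X_def)
    have "\<not> joined (del_verts H' X) x y"
      using sep joined_mono[OF _ vds eds] by blast
    moreover have "x \<in> verts (del_verts H' X)" "y \<in> verts (del_verts H' X)"
      using True hH' xy by (auto simp: X_def hypergraph_def)
    ultimately have "\<not> connected_hg (del_verts H' X)"
      unfolding connected_hg_def by blast
    then have "vertex_cut H' X" by (simp add: vertex_cut_def X_def)
    then have "kappa H' \<le> card X" by (rule kappa_le_card_cut)
    also have "card X \<le> card S"
      using card_mono[OF finite_subset[OF S fin], of X] by (auto simp: X_def)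
    finally show ?thesis using H'(2) by simp
  qed
qed

lemma vertex_k_maximal_edge_across_cut:
  assumes "hypergraph H" "vertex_k_maximal k r H" "S \<subseteq> verts H" "card S = k"
    and "e \<subseteq> verts H" "card e = r" "e \<inter> S \<noteq> {}"
    and "x \<in> e - S" "y \<in> e - S" "\<not> joined (del_verts H S) x y"
  shows "e \<in> edges H"
proof (rule ccontr)
  assume "e \<notin> edges H"
  then have "kappa_bar (add_edge H e) \<ge> k + 1"
    using assms(2,5,6) by (simp add: vertex_k_maximal_def compl_edges_def)
  moreover have "kappa_bar (add_edge H e) \<le> max (kappa_bar H) (card S)"
    using assms by (intro kappa_bar_add_edge_le) (auto simp: hypergraph_def)
  ultimately show False
    using assms(2,4) by (simp add: vertex_k_maximal_def)
qed

definition subsets_of_card :: "nat \<Rightarrow> 'a set \<Rightarrow> 'a set set" where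
  "subsets_of_card r D = {e. e \<subseteq> D \<and> card e = r}"

lemma card_subsets_of_card: "finite D \<Longrightarrow> card (subsets_of_card r D) = card D choose r"
  unfolding subsets_of_card_def by (rule n_subsets)

lemma finite_subsets_of_card: "finite D \<Longrightarrow> finite (subsets_of_card r D)"
  unfolding subsets_of_card_def by (rule finite_subset[of _ "Pow D"]) auto

lemma card_subsets_meeting_both:
  assumes "finite A" "finite B" "A \<inter> B = {}" "r > 0"
  shows "int (card {e. e \<subseteq> A \<union> B \<and> card e = r \<and> e \<inter> A \<noteq> {} \<and> e \<inter> B \<noteq> {}})
    = int (card (A \<union> B) choose r) - int (card A choose r) - int (card B choose r)"
proof -
  define T U where "T = subsets_of_card r (A \<union> B)"
    and "U = subsets_of_card r A \<union> subsets_of_card r B"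
  have "{e. e \<subseteq> A \<union> B \<and> card e = r \<and> e \<inter> A \<noteq> {} \<and> e \<inter> B \<noteq> {}} = T - U"
    using assms(3) by (auto simp: T_def U_def subsets_of_card_def)
  moreover have "subsets_of_card r A \<inter> subsets_of_card r B = {}"
  proof -
    have "e = {}" if "e \<subseteq> A" "e \<subseteq> B" for e using that assms(3) by blast
    then show ?thesis using assms(4) by (auto simp: subsets_of_card_def) (metis card.empty less_irrefl)
  qed
  then have "card U = (card A choose r) + (card B choose r)"
    using assms(1,2) by (simp add: U_def card_Un_disjoint finite_subsets_of_card card_subsets_of_card)
  moreover have "U \<subseteq> T" "finite T"
    using assms(1,2) by (auto simp: T_def U_def subsets_of_card_def finite_subsets_of_card)
  moreover have "card T = card (A \<union> B) choose r"
    using assms(1,2) by (simp add: T_def card_subsets_of_card)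
  ultimately show ?thesis
    using card_mono[of T U] by (simp add: card_Diff_subset finite_subset of_nat_diff)
qed

lemma card_subsets_meeting_three:
  assumes fin: "finite A" "finite S" "finite B"
    and disj: "A \<inter> S = {}" "A \<inter> B = {}" "S \<inter> B = {}" and "r > 0"
  shows "int (card {e. e \<subseteq> A \<union> S \<union> B \<and> card e = r \<and> e \<inter> A \<noteq> {} \<and> e \<inter> S \<noteq> {} \<and> e \<inter> B \<noteq> {}})
    = int (card (A \<union> S \<union> B) choose r) - int (card (A \<union> S) choose r) - int (card (S \<union> B) choose r)
      + int (card S choose r) - int (card (A \<union> B) choose r) + int (card A choose r) + int (card B choose r)"
proof -
  define meeting :: "'a set \<Rightarrow> 'a set \<Rightarrow> 'a set set" where
    "meeting X Y = {e. e \<subseteq> X \<union> Y \<and> card e = r \<and> e \<inter> X \<noteq> {} \<and> e \<inter> Y \<noteq> {}}" for X Y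
  define P where
    "P = {e. e \<subseteq> A \<union> S \<union> B \<and> card e = r \<and> e \<inter> A \<noteq> {} \<and> e \<inter> S \<noteq> {} \<and> e \<inter> B \<noteq> {}}"
  have count: "int (card (meeting X Y))
      = int (card (X \<union> Y) choose r) - int (card X choose r) - int (card Y choose r)"
    if "finite X" "finite Y" "X \<inter> Y = {}" for X Y
    unfolding meeting_def using that \<open>r > 0\<close> by (rule card_subsets_meeting_both)
  have finite_meeting: "finite (meeting X Y)" if "finite X" "finite Y" for X Y
    using that by (auto simp: meeting_def intro: finite_subset[of _ "Pow (X \<union> Y)"])
  have split: "meeting A (S \<union> B) = (P \<union> meeting A B) \<union> meeting A S"
    by (auto simp: meeting_def P_def)
  have "finite P"
    using fin by (auto simp: P_def intro: finite_subset[of _ "Pow (A \<union> S \<union> B)"])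
  moreover have "P \<inter> meeting A B = {}" "(P \<union> meeting A B) \<inter> meeting A S = {}"
    using disj by (auto simp: meeting_def P_def)
  ultimately have "card (meeting A (S \<union> B)) = card P + card (meeting A B) + card (meeting A S)"
    unfolding split using fin finite_meeting by (simp add: card_Un_disjoint)
  moreover have "A \<inter> (S \<union> B) = {}" using disj by blast
  ultimately have "int (card P) = int (card (A \<union> (S \<union> B)) choose r) - int (card (S \<union> B) choose r)
      - int (card (A \<union> B) choose r) - int (card (A \<union> S) choose r)
      + int (card A choose r) + int (card B choose r) + int (card S choose r)"
    using count[of A "S \<union> B"] count[of A B] count[of A S] fin disj by simp
  then show ?thesis unfolding P_def by (simp add: Un_assoc)
qed

lemma separation_triple_partition:
  assumes "separation_triple H k S H1 H2"
  shows "S \<subseteq> verts H" "card S = k"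
    and "verts H1 \<union> verts H2 = verts H" "verts H1 \<inter> verts H2 = S"
    and "x \<in> verts H1 - S \<Longrightarrow> y \<in> verts H2 - S \<Longrightarrow> \<not> joined (del_verts H S) x y"
proof -
  show S: "S \<subseteq> verts H" "card S = k"
    using assms by (auto simp: separation_triple_def vertex_cut_def)
  obtain C1 where C1: "component_verts (del_verts H S) C1" and H1: "H1 = induced H (S \<union> C1)"
    and H2: "H2 = induced H (S \<union> verts (del_verts H (S \<union> C1)))"
    using assms unfolding separation_triple_def by blast
  obtain u where u: "C1 = {v \<in> verts H - S. joined (del_verts H S) u v}"
    using C1 unfolding component_verts_def by auto
  have vH1: "verts H1 = S \<union> C1" and vH2: "verts H2 = S \<union> (verts H - S - C1)"
    unfolding H1 H2 by auto
  have "C1 \<subseteq> verts H - S" using u by blast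
  then show "verts H1 \<union> verts H2 = verts H" "verts H1 \<inter> verts H2 = S"
    unfolding vH1 vH2 using S(1) by auto
  show "\<not> joined (del_verts H S) x y" if "x \<in> verts H1 - S" "y \<in> verts H2 - S"
  proof
    assume xy: "joined (del_verts H S) x y"
    have "joined (del_verts H S) u x" using that(1) u vH1 by blast
    then have "joined (del_verts H S) u y" using xy by (rule joined_trans)
    then show False using that(2) u vH2 by blast
  qed
qed

lemma separation_triple_crossing_edge:
  assumes "hypergraph H" "vertex_k_maximal k r H" "separation_triple H k S H1 H2"
    and "e \<subseteq> verts H" "card e = r"
    and "e \<inter> (verts H1 - S) \<noteq> {} \<and> e \<inter> S \<noteq> {} \<and> e \<inter> (verts H2 - S) \<noteq> {}"
  shows "e \<in> edges H"
proof -
  note part = separation_triple_partition[OF assms(3)]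
  obtain x y where x: "x \<in> e" "x \<in> verts H1 - S" and y: "y \<in> e" "y \<in> verts H2 - S"
    using assms(6) by blast
  then have "\<not> joined (del_verts H S) x y" by (intro part(5))
  with x y show ?thesis
    using vertex_k_maximal_edge_across_cut[OF assms(1,2) part(1,2) assms(4,5)] assms(6) by blast
qed

lemma edges_eq_r_subsets_if_complete:
  assumes "hypergraph H" "uniform r H"
    and "\<And>e. e \<subseteq> verts H \<Longrightarrow> card e = r \<Longrightarrow> P e \<Longrightarrow> e \<in> edges H"
  shows "{e \<in> edges H. P e} = {e. e \<subseteq> verts H \<and> card e = r \<and> P e}"
  using assms unfolding hypergraph_def uniform_def by blast

theorem lemma2p3:
  fixes H H1 H2 :: "'a hg" and S :: "'a set" and n k r :: nat
  assumes "k \<ge> 2" and "r \<ge> 2" and "n \<ge> k + r"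
    and "hypergraph H" and "uniform r H" and "card (verts H) = n"
    and "vertex_k_maximal k r H"
    and "separation_triple H k S H1 H2"
  shows "(\<forall>e. e \<subseteq> verts H \<and> card e = r \<and> e \<inter> (verts H1 - S) \<noteq> {} \<and> e \<inter> S \<noteq> {}
              \<and> e \<inter> (verts H2 - S) \<noteq> {} \<longrightarrow> e \<in> edges H)
       \<and> int (card {e \<in> edges H. e \<inter> (verts H1 - S) \<noteq> {} \<and> e \<inter> S \<noteq> {} \<and> e \<inter> (verts H2 - S) \<noteq> {}})
         = int (n choose r) - int (card (verts H1) choose r) - int (card (verts H2) choose r)
           + int (k choose r) - int ((n - k) choose r)
           + int ((card (verts H1) - k) choose r) + int ((card (verts H2) - k) choose r)"
proof -
  note part = separation_triple_partition[OF assms(8)]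
  define A B where "A = verts H1 - S" and "B = verts H2 - S"
  have V: "verts H = A \<union> S \<union> B" "verts H1 = A \<union> S" "verts H2 = S \<union> B"
    and disj: "A \<inter> S = {}" "A \<inter> B = {}" "S \<inter> B = {}"
    using part(3,4) unfolding A_def B_def by blast+
  have fin: "finite A" "finite S" "finite B"
    using assms(4) V(1) by (auto simp: hypergraph_def)
  have crossing: "e \<in> edges H"
    if "e \<subseteq> verts H" "card e = r" "e \<inter> A \<noteq> {} \<and> e \<inter> S \<noteq> {} \<and> e \<inter> B \<noteq> {}" for e
    using separation_triple_crossing_edge[OF assms(4,7,8)] that unfolding A_def B_def by blast
  have "{e \<in> edges H. e \<inter> A \<noteq> {} \<and> e \<inter> S \<noteq> {} \<and> e \<inter> B \<noteq> {}}
      = {e. e \<subseteq> A \<union> S \<union> B \<and> card e = r \<and> e \<inter> A \<noteq> {} \<and> e \<inter> S \<noteq> {} \<and> e \<inter> B \<noteq> {}}"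
    using edges_eq_r_subsets_if_complete[OF assms(4,5) crossing] unfolding V(1) .
  moreover have "card (verts H1) - k = card A" "card (verts H2) - k = card B"
      "n - k = card (A \<union> B)"
    using fin disj part(2) assms(6) unfolding V by (simp_all add: card_Un_disjoint Int_Un_distrib2)
  moreover have "r > 0" using assms(2) by simp
  ultimately show ?thesis
    unfolding A_def[symmetric] B_def[symmetric]
    using crossing card_subsets_meeting_three[OF fin disj] part(2) assms(6) V by simp
qed

end
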